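(* Let $M$ be a connected matroid on $E$ and $S\subseteq E$ such that $M|_S$ is connected. Write $M/S=\bigoplus_i N_i$ where each $N_i$ is a connected matroid on a set $A_i$ (so the $A_i$ are the connected components of $M/S$). Then for each $i$, $M|_{A_i\cup S}$ is connected.
   Context: A matroid is connected if it is not a direct sum of two matroids on nonempty ground sets. $M|_S$ is the restriction to $S$ and $M/S$ is the contraction, the matroid on $E-S$ with $\mathrm{rk}_{M/S}(A)=\mathrm{rk}(A\cup S)-\mathrm{rk}(S)$. *)

theory Defs
  imports Main
begin

text \<open>A matroid on a finite ground set E, given by its rank function r
  (only the values on subsets of E matter).\<close>
definition matroid :: "'a set \<Rightarrow> ('a set \<Rightarrow> nat) \<Rightarrow> bool" where
  "matroid E r \<longleftrightarrow> finite E
     \<and> (\<forall>A. A \<subseteq> E \<longrightarrow> r A \<le> card A)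
     \<and> (\<forall>A B. A \<subseteq> B \<longrightarrow> B \<subseteq> E \<longrightarrow> r A \<le> r B)
     \<and> (\<forall>A B. A \<subseteq> E \<longrightarrow> B \<subseteq> E \<longrightarrow> r (A \<union> B) + r (A \<inter> B) \<le> r A + r B)"

text \<open>Restriction M|S is the matroid on S with the same rank function r.
  Contraction M/S is the matroid on E - S with rank A |-> r(A \<union> S) - r(S).\<close>
definition contract_rank :: "('a set \<Rightarrow> nat) \<Rightarrow> 'a set \<Rightarrow> 'a set \<Rightarrow> nat" where
  "contract_rank r S = (\<lambda>A. r (A \<union> S) - r S)"

definition direct_sum_split :: "'a set \<Rightarrow> ('a set \<Rightarrow> nat) \<Rightarrow> 'a set \<Rightarrow> 'a set \<Rightarrow> bool" where
  "direct_sum_split E r E1 E2 \<longleftrightarrow> E1 \<union> E2 = E \<and> E1 \<inter> E2 = {} \<and> E1 \<noteq> {} \<and> E2 \<noteq> {}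
     \<and> (\<forall>X. X \<subseteq> E \<longrightarrow> r X = r (X \<inter> E1) + r (X \<inter> E2))"

definition connected_matroid :: "'a set \<Rightarrow> ('a set \<Rightarrow> nat) \<Rightarrow> bool" where
  "connected_matroid E r \<longleftrightarrow> \<not> (\<exists>E1 E2. direct_sum_split E r E1 E2)"

end

theory Submission
  imports Defs
begin

text \<open>Let \<open>A\<union>S = E\<^sub>1 \<oplus> E\<^sub>2\<close>. As \<open>M|S\<close> is connected, \<open>S\<close> lies in one summand, say \<open>E\<^sub>1\<close>;
  contracting \<open>S\<close> turns the split into \<open>N\<^sub>A = (E\<^sub>1 - S) \<oplus> E\<^sub>2\<close>, so connectivity of \<open>N\<^sub>A\<close>
  forces \<open>E\<^sub>1 = S\<close>, \<open>E\<^sub>2 = A\<close>: the sets \<open>A\<close> and \<open>S\<close> are skew. Skewness of \<open>A\<close> to \<open>S\<close>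
  together with \<open>M/S = N\<^sub>A \<oplus> M/S|(E - S - A)\<close> gives \<open>M = M|A \<oplus> M|(E - A)\<close>, contradicting
  connectivity of \<open>M\<close>.\<close>

lemma matroid_rank_empty: "matroid E r \<Longrightarrow> r {} = 0"
  unfolding matroid_def by (metis card.empty empty_subsetI le_zero_eq)

lemma matroid_rank_mono: "matroid E r \<Longrightarrow> X \<subseteq> Y \<Longrightarrow> Y \<subseteq> E \<Longrightarrow> r X \<le> r Y"
  unfolding matroid_def by blast

lemma matroid_rank_submod:
  "matroid E r \<Longrightarrow> X \<subseteq> E \<Longrightarrow> Y \<subseteq> E \<Longrightarrow> r (X \<union> Y) + r (X \<inter> Y) \<le> r X + r Y"
  unfolding matroid_def by blast

lemma direct_sum_split_commute:
  "direct_sum_split E r E1 E2 \<Longrightarrow> direct_sum_split E r E2 E1"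
  unfolding direct_sum_split_def by (auto simp: add.commute)

lemma connected_subset_in_summand:
  assumes split: "direct_sum_split T r E1 E2" and "S \<subseteq> T" and "connected_matroid S r"
  shows "S \<subseteq> E1 \<or> S \<subseteq> E2"
proof (rule ccontr)
  assume "\<not> ?thesis"
  with split \<open>S \<subseteq> T\<close> have "S \<inter> E1 \<noteq> {}" "S \<inter> E2 \<noteq> {}"
    unfolding direct_sum_split_def by blast+
  then have "direct_sum_split S r (S \<inter> E1) (S \<inter> E2)"
    unfolding direct_sum_split_def
  proof (intro conjI allI impI)
    show "S \<inter> E1 \<union> S \<inter> E2 = S" "S \<inter> E1 \<inter> (S \<inter> E2) = {}"
      using split \<open>S \<subseteq> T\<close> unfolding direct_sum_split_def by blast+
    fix X assume "X \<subseteq> S"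
    then have "X \<inter> (S \<inter> E1) = X \<inter> E1" "X \<inter> (S \<inter> E2) = X \<inter> E2" by blast+
    with split \<open>X \<subseteq> S\<close> \<open>S \<subseteq> T\<close> show "r X = r (X \<inter> (S \<inter> E1)) + r (X \<inter> (S \<inter> E2))"
      unfolding direct_sum_split_def by auto
  qed
  with \<open>connected_matroid S r\<close> show False
    unfolding connected_matroid_def by blast
qed

lemma direct_sum_split_contract:
  assumes M: "matroid E r" and "A \<union> S \<subseteq> E" and "A \<inter> S = {}"
    and split: "direct_sum_split (A \<union> S) r E1 E2" and "S \<subset> E1"
  shows "direct_sum_split A (contract_rank r S) (E1 - S) E2"
  unfolding direct_sum_split_def
proof (intro conjI allI impI)
  have union: "E1 \<union> E2 = A \<union> S" and disj: "E1 \<inter> E2 = {}" and "E2 \<noteq> {}"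
    and rank_split: "\<And>X. X \<subseteq> A \<union> S \<Longrightarrow> r X = r (X \<inter> E1) + r (X \<inter> E2)"
    using split unfolding direct_sum_split_def by auto
  show "E1 - S \<union> E2 = A" "(E1 - S) \<inter> E2 = {}" "E1 - S \<noteq> {}" "E2 \<noteq> {}"
    using union disj \<open>S \<subset> E1\<close> \<open>A \<inter> S = {}\<close> \<open>E2 \<noteq> {}\<close> by blast+
  fix X assume "X \<subseteq> A"
  have "(X \<union> S) \<inter> E1 = X \<inter> (E1 - S) \<union> S" "(X \<union> S) \<inter> E2 = X \<inter> E2"
    using \<open>S \<subset> E1\<close> disj by blast+
  with \<open>X \<subseteq> A\<close> have whole: "r (X \<union> S) = r (X \<inter> (E1 - S) \<union> S) + r (X \<inter> E2)"
    using rank_split[of "X \<union> S"] by auto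
  have "(X \<inter> E2 \<union> S) \<inter> E1 = S" "(X \<inter> E2 \<union> S) \<inter> E2 = X \<inter> E2"
    using \<open>S \<subset> E1\<close> disj by blast+
  with \<open>X \<subseteq> A\<close> have second: "r (X \<inter> E2 \<union> S) = r S + r (X \<inter> E2)"
    using rank_split[of "X \<inter> E2 \<union> S"] by auto
  have "r S \<le> r (X \<inter> (E1 - S) \<union> S)"
    using \<open>X \<subseteq> A\<close> \<open>A \<union> S \<subseteq> E\<close> by (intro matroid_rank_mono[OF M]) auto
  with whole second show "contract_rank r S X
      = contract_rank r S (X \<inter> (E1 - S)) + contract_rank r S (X \<inter> E2)"
    unfolding contract_rank_def by simp
qed

lemma direct_sum_split_over_connected_contraction:
  assumes M: "matroid E r" and "A \<union> S \<subseteq> E" and "A \<inter> S = {}"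
    and "connected_matroid S r" and conA: "connected_matroid A (contract_rank r S)"
    and split: "direct_sum_split (A \<union> S) r E1 E2"
  shows "direct_sum_split (A \<union> S) r S A"
proof -
  obtain F1 F2 where splitF: "direct_sum_split (A \<union> S) r F1 F2" and "S \<subseteq> F1"
    using connected_subset_in_summand[OF split _ \<open>connected_matroid S r\<close>]
      split direct_sum_split_commute[OF split] by blast
  have "F1 = S"
  proof (rule ccontr)
    assume "F1 \<noteq> S"
    with \<open>S \<subseteq> F1\<close> have "S \<subset> F1" by blast
    with conA show False
      using direct_sum_split_contract[OF M \<open>A \<union> S \<subseteq> E\<close> \<open>A \<inter> S = {}\<close> splitF]
      unfolding connected_matroid_def by blast
  qed
  moreover from this splitF \<open>A \<inter> S = {}\<close> have "F2 = A"
    unfolding direct_sum_split_def by blast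
  ultimately show ?thesis using splitF by simp
qed

lemma sum_over_partition_split_block:
  fixes f :: "'a set \<Rightarrow> 'b::comm_monoid_add"
  assumes decomp: "\<forall>X. X \<subseteq> U \<longrightarrow> f X = (\<Sum>B\<in>P. f (X \<inter> B))"
    and disj: "\<forall>A\<in>P. \<forall>B\<in>P. A \<noteq> B \<longrightarrow> A \<inter> B = {}"
    and "A \<in> P" and "f {} = 0" and "W \<subseteq> U"
  shows "f W = f (W \<inter> A) + f (W - A)"
proof -
  have "f W = (\<Sum>B\<in>P. f (W \<inter> B))" using decomp \<open>W \<subseteq> U\<close> by blast
  also have "\<dots> = (\<Sum>B\<in>P. f (W \<inter> A \<inter> B) + f ((W - A) \<inter> B))"
  proof (rule sum.cong[OF refl])
    fix B assume "B \<in> P"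
    show "f (W \<inter> B) = f (W \<inter> A \<inter> B) + f ((W - A) \<inter> B)"
    proof (cases "B = A")
      case True
      then have "W \<inter> A \<inter> B = W \<inter> B" "(W - A) \<inter> B = {}" by blast+
      then show ?thesis using \<open>f {} = 0\<close> by simp
    next
      case False
      with disj \<open>A \<in> P\<close> \<open>B \<in> P\<close> have "W \<inter> A \<inter> B = {}" "(W - A) \<inter> B = W \<inter> B" by blast+
      then show ?thesis using \<open>f {} = 0\<close> by simp
    qed
  qed
  also have "\<dots> = (\<Sum>B\<in>P. f (W \<inter> A \<inter> B)) + (\<Sum>B\<in>P. f ((W - A) \<inter> B))"
    by (rule sum.distrib)
  also have "\<dots> = f (W \<inter> A) + f (W - A)"
    using decomp \<open>W \<subseteq> U\<close> by (metis Diff_subset inf.coboundedI1 subset_trans)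
  finally show ?thesis .
qed

lemma rank_split_off_skew_component:
  assumes M: "matroid E r" and "S \<subseteq> E" and A: "A \<subseteq> E - S"
    and skew: "direct_sum_split (A \<union> S) r S A"
    and contract_split: "\<And>W. W \<subseteq> E - S \<Longrightarrow>
      contract_rank r S W = contract_rank r S (W \<inter> A) + contract_rank r S (W - A)"
    and "X \<subseteq> E"
  shows "r X = r (X \<inter> A) + r (X - A)"
proof (rule antisym)
  have "r (X \<inter> A \<union> (X - A)) + r (X \<inter> A \<inter> (X - A)) \<le> r (X \<inter> A) + r (X - A)"
    using \<open>X \<subseteq> E\<close> by (intro matroid_rank_submod[OF M]) auto
  moreover have "X \<inter> A \<union> (X - A) = X" "X \<inter> A \<inter> (X - A) = {}" by blast+
  ultimately show "r X \<le> r (X \<inter> A) + r (X - A)"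
    using matroid_rank_empty[OF M] by simp
next
  have skew_rank: "r (Y \<union> S) = r S + r Y" if "Y \<subseteq> A" for Y
  proof -
    have "(Y \<union> S) \<inter> S = S" "(Y \<union> S) \<inter> A = Y" using that A by blast+
    moreover have "Y \<union> S \<subseteq> A \<union> S" using that by blast
    ultimately show ?thesis using skew unfolding direct_sum_split_def by metis
  qed
  have lifted: "r (X \<union> S) = r (X \<inter> A) + r ((X - A) \<union> S)"
  proof -
    have "contract_rank r S (X - S)
        = contract_rank r S (X \<inter> A) + contract_rank r S (X - S - A)"
    proof -
      have "(X - S) \<inter> A = X \<inter> A" using A by blast
      then show ?thesis using contract_split[of "X - S"] \<open>X \<subseteq> E\<close> by auto
    qed
    moreover have "X - S \<union> S = X \<union> S" "X - S - A \<union> S = X - A \<union> S" using A by blast+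
    moreover have "r S \<le> r (X - A \<union> S)" "r S \<le> r (X \<union> S)"
      using \<open>X \<subseteq> E\<close> \<open>S \<subseteq> E\<close> by (auto intro: matroid_rank_mono[OF M])
    ultimately show ?thesis
      using skew_rank[of "X \<inter> A"] unfolding contract_rank_def by simp
  qed
  have "r (X \<union> (X - A \<union> S)) + r (X \<inter> (X - A \<union> S)) \<le> r X + r (X - A \<union> S)"
    using \<open>X \<subseteq> E\<close> \<open>S \<subseteq> E\<close> by (intro matroid_rank_submod[OF M]) auto
  moreover have "X \<union> (X - A \<union> S) = X \<union> S" "X \<inter> (X - A \<union> S) = X - A" using A by blast+
  ultimately show "r (X \<inter> A) + r (X - A) \<le> r X" using lifted by simp
qed

theorem lemma6p6:
  fixes E S :: "'a set" and r :: "'a set \<Rightarrow> nat" and P :: "'a set set"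
  assumes "matroid E r"
    and "connected_matroid E r"
    and "S \<subseteq> E"
    and "connected_matroid S r"
    and "\<Union>P = E - S"
    and "\<forall>A\<in>P. \<forall>B\<in>P. A \<noteq> B \<longrightarrow> A \<inter> B = {}"
    and "\<forall>A\<in>P. A \<noteq> {}"
    and "\<forall>X. X \<subseteq> E - S \<longrightarrow> contract_rank r S X = (\<Sum>A\<in>P. contract_rank r S (X \<inter> A))"
    and "\<forall>A\<in>P. connected_matroid A (contract_rank r S)"
    and "A \<in> P"
  shows "connected_matroid (A \<union> S) r"
  unfolding connected_matroid_def
proof
  assume "\<exists>E1 E2. direct_sum_split (A \<union> S) r E1 E2"
  then obtain E1 E2 where split: "direct_sum_split (A \<union> S) r E1 E2" by blast
  have A: "A \<subseteq> E - S" using assms(5,10) by blast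
  have skew: "direct_sum_split (A \<union> S) r S A"
    using direct_sum_split_over_connected_contraction[OF assms(1) _ _ assms(4) _ split]
      A assms(3,9,10) by blast
  have contract_split: "contract_rank r S W
      = contract_rank r S (W \<inter> A) + contract_rank r S (W - A)" if "W \<subseteq> E - S" for W
    using sum_over_partition_split_block[OF assms(8,6,10) _ that]
    by (simp add: contract_rank_def)
  have "direct_sum_split E r (E - A) A"
    unfolding direct_sum_split_def
  proof (intro conjI allI impI)
    have "S \<noteq> {}" using skew unfolding direct_sum_split_def by (elim conjE)
    then show "E - A \<union> A = E" "(E - A) \<inter> A = {}" "E - A \<noteq> {}" "A \<noteq> {}"
      using A assms(3,7,10) by blast+
    fix X assume "X \<subseteq> E"
    then have "X \<inter> (E - A) = X - A" by blast
    with rank_split_off_skew_component[OF assms(1,3) A skew contract_split \<open>X \<subseteq> E\<close>]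
    show "r X = r (X \<inter> (E - A)) + r (X \<inter> A)" by simp
  qed
  with assms(2) show False unfolding connected_matroid_def by blast
qed

end
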